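(* Let $q$ be odd, let $C_1,C_2$ be linear codes of length $n$ over $\mathbb{F}_q$ that are both $b$-symbol MDS codes, with $d_b(C_1)\le d_b(C_2)$ and $1\le b\le\min\{\dim C_1,\dim C_2\}$. Let $C=\{[\mathbf{u}+\mathbf{v},\mathbf{u}-\mathbf{v}]:\mathbf{u}\in C_1,\mathbf{v}\in C_2\}\subseteq\mathbb{F}_q^{2n}$. Then $$d_b(C_1)\le d_b(C)\le d_b(C_1)+d_b(C_2)-b.$$
   Context: For $\mathbf{x}\in\mathbb{F}_q^L$ and $1\le b\le L$, $\chi_b(\mathbf{x})=\{i:(x_i,\dots,x_{i+b-1})\ne\mathbf{0}\}$ (indices mod $L$), $w_b(\mathbf{x})=|\chi_b(\mathbf{x})|$, and $d_b(C)=\min_{\mathbf{0}\ne\mathbf{c}\in C}w_b(\mathbf{c})$. An $[n,k]_q$-linear code $C$ is a $b$-symbol MDS code if $d_b(C)=\min\{n-k+b,n\}$. *)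

theory Defs
  imports Complex_Main "HOL-Library.Function_Algebras"
begin

text \<open>Vectors of length L over a field are modelled as functions nat \<Rightarrow> 'a that
vanish outside {0..<L}. Scalar multiplication is pointwise.\<close>

definition scaleF :: "'a::field \<Rightarrow> (nat \<Rightarrow> 'a) \<Rightarrow> nat \<Rightarrow> 'a" where
  "scaleF c x = (\<lambda>i. c * x i)"

lemma vector_space_scaleF: "vector_space (scaleF :: 'a::field \<Rightarrow> _)"
  by unfold_locales (auto simp: scaleF_def fun_eq_iff algebra_simps)

definition vecs :: "nat \<Rightarrow> (nat \<Rightarrow> 'a::zero) set" where
  "vecs L = {x. \<forall>i\<ge>L. x i = 0}"

definition linear_code :: "nat \<Rightarrow> (nat \<Rightarrow> 'a::field) set \<Rightarrow> bool" where
  "linear_code L C \<longleftrightarrow> module.subspace scaleF C \<and> C \<subseteq> vecs L"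

definition code_dim :: "(nat \<Rightarrow> 'a::field) set \<Rightarrow> nat" where
  "code_dim C = vector_space.dim scaleF C"

definition b_support :: "nat \<Rightarrow> nat \<Rightarrow> (nat \<Rightarrow> 'a::zero) \<Rightarrow> nat set" where
  "b_support L b x = {i. i < L \<and> (\<exists>j<b. x ((i + j) mod L) \<noteq> 0)}"

definition b_weight :: "nat \<Rightarrow> nat \<Rightarrow> (nat \<Rightarrow> 'a::zero) \<Rightarrow> nat" where
  "b_weight L b x = card (b_support L b x)"

definition b_dist :: "nat \<Rightarrow> nat \<Rightarrow> (nat \<Rightarrow> 'a::zero) set \<Rightarrow> nat" where
  "b_dist L b C = Min {b_weight L b c | c. c \<in> C \<and> c \<noteq> 0}"

definition b_symbol_MDS :: "nat \<Rightarrow> nat \<Rightarrow> (nat \<Rightarrow> 'a::field) set \<Rightarrow> bool" where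
  "b_symbol_MDS L b C \<longleftrightarrow> linear_code L C \<and>
     b_dist L b C = min (L - code_dim C + b) L"

definition plus_minus_code :: "nat \<Rightarrow> (nat \<Rightarrow> 'a::ab_group_add) set \<Rightarrow> (nat \<Rightarrow> 'a) set \<Rightarrow> (nat \<Rightarrow> 'a) set" where
  "plus_minus_code n C1 C2 = {(\<lambda>i. if i < n then u i + v i
                                  else if i < 2 * n then u (i - n) - v (i - n) else 0)
                               | u v. u \<in> C1 \<and> v \<in> C2}"

end

theory Submission
  imports Defs "HOL-Number_Theory.Residues"
begin

text \<open>Since q is odd, u + v and u - v determine u and v: whenever u or v is nonzero at a
  position m < n, the word [u + v, u - v] is nonzero at m or at m + n. Folding a codeword of C
  onto length n therefore does not increase its b-weight and covers the support of u (or of v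
  when u = 0), which gives d_b(C) \<ge> min (d_b(C_1)) (d_b(C_2)) = d_b(C_1). The same fact makes
  (u, v) \<mapsto> [u + v, u - v] injective, so dim C = k_1 + k_2, and the b-symbol Singleton bound
  d_b(C) \<le> 2n - (k_1 + k_2) + b, rewritten with the MDS identities d_b(C_i) = n - k_i + b,
  is the upper bound.\<close>

lemma two_neq_zero_if_odd_card:
  assumes "odd (card (UNIV :: 'a::{finite,field} set))"
  shows "(2::'a) \<noteq> 0"
proof
  assume "(2::'a) = 0"
  then have "CHAR('a) dvd 2"
    using of_nat_eq_0_iff_char_dvd[of 2, where 'a='a] by simp
  moreover have "CHAR('a) dvd card (UNIV :: 'a set)" by (rule CHAR_dvd_CARD)
  moreover have "coprime 2 (card (UNIV :: 'a set))"
    using assms by (simp add: coprime_left_2_iff_odd)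
  ultimately have "CHAR('a) = 1" using coprime_common_divisor_nat by blast
  then show False by simp
qed

lemma (in vector_space) card_subspace:
  assumes "finite (UNIV :: 'a set)" and "finite S" and "subspace S"
  shows "card S = card (UNIV :: 'a set) ^ dim S"
proof -
  obtain B where B: "B \<subseteq> S" "independent B" "S \<subseteq> span B" "card B = dim S"
    using basis_exists by blast
  have "finite B" using B(1) assms(2) finite_subset by blast
  define comb where "comb u = (\<Sum>v\<in>B. u v *s v)" for u
  have "comb ` (B \<rightarrow>\<^sub>E UNIV) = span B"
  proof -
    have "comb u = comb (restrict u B)" for u unfolding comb_def by (intro sum.cong) auto
    then have "range comb = comb ` (B \<rightarrow>\<^sub>E UNIV)" by force
    then show ?thesis using span_finite[OF \<open>finite B\<close>] unfolding comb_def by simp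
  qed
  also have "span B = S"
    using B(1,3) assms(3) span_minimal span_mono by blast
  finally have image: "comb ` (B \<rightarrow>\<^sub>E UNIV) = S" .
  have "inj_on comb (B \<rightarrow>\<^sub>E UNIV)"
  proof (rule inj_onI)
    fix u w assume u: "u \<in> B \<rightarrow>\<^sub>E UNIV" and w: "w \<in> B \<rightarrow>\<^sub>E UNIV" and "comb u = comb w"
    then have "(\<Sum>v\<in>B. (u v - w v) *s v) = 0"
      unfolding comb_def by (simp add: scale_left_diff_distrib sum_subtractf)
    then have "u v = w v" if "v \<in> B" for v
      using independentD[OF B(2) \<open>finite B\<close> subset_refl, of "\<lambda>v. u v - w v"] that by simp
    then show "u = w" using u w by (metis PiE_ext)
  qed
  then have "card S = card (B \<rightarrow>\<^sub>E (UNIV :: 'a set))"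
    using image card_image by fastforce
  then show ?thesis using B(4) \<open>finite B\<close> by (simp add: card_PiE)
qed

interpretation V: vector_space "scaleF :: 'a::field \<Rightarrow> (nat \<Rightarrow> 'a) \<Rightarrow> nat \<Rightarrow> 'a"
  by (rule vector_space_scaleF)

lemma card_vecs: "card (vecs L :: (nat \<Rightarrow> 'a::{finite,zero}) set) = card (UNIV :: 'a set) ^ L"
proof -
  have "inj_on (\<lambda>x. restrict x {..<L}) (vecs L :: (nat \<Rightarrow> 'a) set)"
  proof (rule inj_onI)
    fix x y :: "nat \<Rightarrow> 'a"
    assume "x \<in> vecs L" "y \<in> vecs L" and eq: "restrict x {..<L} = restrict y {..<L}"
    show "x = y"
    proof
      fix i show "x i = y i"
      proof (cases "i < L")
        case True
        then show ?thesis using fun_cong[OF eq, of i] by simp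
      next
        case False
        then show ?thesis using \<open>x \<in> vecs L\<close> \<open>y \<in> vecs L\<close> by (simp add: vecs_def)
      qed
    qed
  qed
  moreover have "(\<lambda>x. restrict x {..<L}) ` vecs L = ({..<L} \<rightarrow>\<^sub>E (UNIV :: 'a set))"
  proof
    show "(\<lambda>x. restrict x {..<L}) ` vecs L \<subseteq> ({..<L} \<rightarrow>\<^sub>E (UNIV :: 'a set))"
      by (simp add: image_subset_iff)
    show "({..<L} \<rightarrow>\<^sub>E UNIV) \<subseteq> (\<lambda>x. restrict x {..<L}) ` (vecs L :: (nat \<Rightarrow> 'a) set)"
    proof
      fix f :: "nat \<Rightarrow> 'a" assume f: "f \<in> {..<L} \<rightarrow>\<^sub>E UNIV"
      have ext: "(\<lambda>i. if i < L then f i else 0) \<in> vecs L" by (simp add: vecs_def)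
      have "f = restrict (\<lambda>i. if i < L then f i else 0) {..<L}"
        by (rule PiE_ext[OF f]) simp_all
      then show "f \<in> (\<lambda>x. restrict x {..<L}) ` vecs L" by (rule image_eqI[OF _ ext])
    qed
  qed
  ultimately have "card (vecs L :: (nat \<Rightarrow> 'a) set) = card ({..<L} \<rightarrow>\<^sub>E (UNIV :: 'a set))"
    by (metis card_image)
  then show ?thesis by (simp add: card_PiE)
qed

lemma finite_vecs: "finite (vecs L :: (nat \<Rightarrow> 'a::{finite,zero}) set)"
  by (rule card_ge_0_finite) (simp add: card_vecs finite_UNIV_card_ge_0)

lemma finite_linear_code: "linear_code L C \<Longrightarrow> finite (C :: (nat \<Rightarrow> 'a::{finite,field}) set)"
  unfolding linear_code_def using finite_vecs finite_subset by blast

lemma card_linear_code: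
  "linear_code L C \<Longrightarrow>
    card (C :: (nat \<Rightarrow> 'a::{finite,field}) set) = card (UNIV :: 'a set) ^ code_dim C"
  unfolding code_dim_def
  by (rule V.card_subspace) (auto simp: finite_linear_code linear_code_def)

lemma card_field_ge_2: "2 \<le> card (UNIV :: 'a::{finite,field} set)"
  using card_mono[of UNIV "{0::'a, 1}"] by simp

lemma code_dim_le_length:
  assumes "linear_code L (C :: (nat \<Rightarrow> 'a::{finite,field}) set)"
  shows "code_dim C \<le> L"
proof -
  have "card C \<le> card (vecs L :: (nat \<Rightarrow> 'a) set)"
    using assms by (intro card_mono[OF finite_vecs]) (simp add: linear_code_def)
  then have "card (UNIV :: 'a set) ^ code_dim C \<le> card (UNIV :: 'a set) ^ L"
    by (simp only: card_linear_code[OF assms] card_vecs)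
  then show ?thesis using card_field_ge_2[where 'a='a] by simp
qed

lemma exists_nonzero_if_code_dim_pos:
  assumes "0 < code_dim (C :: (nat \<Rightarrow> 'a::field) set)"
  shows "\<exists>c \<in> C. c \<noteq> 0"
proof (rule ccontr)
  assume "\<not> ?thesis"
  then have "C \<subseteq> V.span {}" by auto
  then have "code_dim C \<le> card {}" unfolding code_dim_def using V.dim_le_card[of C "{}"] by simp
  then show False using assms by simp
qed

lemma finite_b_support: "finite (b_support L b x)"
  unfolding b_support_def by simp

lemma b_dist_le_b_weight:
  assumes "finite C" "c \<in> C" "c \<noteq> 0"
  shows "b_dist L b C \<le> b_weight L b c"
  unfolding b_dist_def using assms by (intro Min_le) auto

lemma b_dist_greatest:
  assumes "finite C" "c \<in> C" "c \<noteq> 0"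
    and "\<And>c. c \<in> C \<Longrightarrow> c \<noteq> 0 \<Longrightarrow> d \<le> b_weight L b c"
  shows "d \<le> b_dist L b C"
  unfolding b_dist_def using assms by (intro Min.boundedI) auto

lemma b_weight_le_if_vanishes_below:
  assumes "\<And>i. i < k \<Longrightarrow> c i = 0" and "k \<le> L"
  shows "b_weight L b c \<le> L - (k + 1 - b)"
proof -
  have "b_support L b c \<subseteq> {k + 1 - b..<L}"
  proof
    fix i assume "i \<in> b_support L b c"
    then obtain j where "i < L" "j < b" and nonzero: "c ((i + j) mod L) \<noteq> 0"
      by (auto simp: b_support_def)
    have "k \<le> i + j"
    proof (rule ccontr)
      assume "\<not> k \<le> i + j"
      then have "(i + j) mod L = i + j" using \<open>k \<le> L\<close> by simp
      then show False using nonzero assms(1) \<open>\<not> k \<le> i + j\<close> by simp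
    qed
    then show "i \<in> {k + 1 - b..<L}" using \<open>i < L\<close> \<open>j < b\<close> by simp
  qed
  then show ?thesis unfolding b_weight_def using card_mono[of "{k + 1 - b..<L}"] by fastforce
qed

lemma exists_nonzero_vanishing_below:
  fixes C :: "(nat \<Rightarrow> 'a::{finite,field}) set"
  assumes "V.subspace C" "finite C" "card (UNIV :: 'a set) ^ k < card C"
  obtains c where "c \<in> C" "c \<noteq> 0" "\<And>i. i < k \<Longrightarrow> c i = 0"
proof -
  define prefix where "prefix x = (\<lambda>i. if i < k then x i else 0)" for x :: "nat \<Rightarrow> 'a"
  have "prefix ` C \<subseteq> vecs k" by (auto simp: prefix_def vecs_def)
  then have "card (prefix ` C) < card C"
    using card_mono[OF finite_vecs] card_vecs assms(3) by (metis le_less_trans)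
  then have "\<not> inj_on prefix C" using card_image by fastforce
  then obtain x y where "x \<in> C" "y \<in> C" "x \<noteq> y" "prefix x = prefix y"
    unfolding inj_on_def by blast
  show thesis
  proof
    show "x - y \<in> C" using V.subspace_diff[OF assms(1)] \<open>x \<in> C\<close> \<open>y \<in> C\<close> .
    show "x - y \<noteq> 0" using \<open>x \<noteq> y\<close> by simp
    show "(x - y) i = 0" if "i < k" for i
      using fun_cong[OF \<open>prefix x = prefix y\<close>, of i] that by (simp add: prefix_def)
  qed
qed

lemma b_dist_singleton:
  fixes C :: "(nat \<Rightarrow> 'a::{finite,field}) set"
  assumes "linear_code L C" and "0 < code_dim C"
  shows "b_dist L b C \<le> L + b - code_dim C"
proof -
  let ?k = "code_dim C"
  have "V.subspace C" using assms(1) by (simp add: linear_code_def)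
  have "card (UNIV :: 'a set) ^ (?k - 1) < card (UNIV :: 'a set) ^ ?k"
    using card_field_ge_2[where 'a='a] assms(2) by (intro power_strict_increasing) auto
  then obtain c where "c \<in> C" "c \<noteq> 0" "\<And>i. i < ?k - 1 \<Longrightarrow> c i = 0"
    using exists_nonzero_vanishing_below[OF \<open>V.subspace C\<close> finite_linear_code[OF assms(1)]]
    by (metis card_linear_code[OF assms(1)])
  moreover have "?k - 1 \<le> L" using code_dim_le_length[OF assms(1)] by simp
  ultimately have "b_weight L b c \<le> L - (?k - 1 + 1 - b)"
    using b_weight_le_if_vanishes_below by blast
  moreover have "b_dist L b C \<le> b_weight L b c"
    using b_dist_le_b_weight finite_linear_code[OF assms(1)] \<open>c \<in> C\<close> \<open>c \<noteq> 0\<close> by blast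
  ultimately show ?thesis using assms(2) by linarith
qed

lemma mod_double_cases:
  fixes x n :: nat
  assumes "0 < n"
  shows "{x mod (2 * n), (x + n) mod (2 * n)} = {x mod n, x mod n + n}"
proof -
  have parity: "k mod 2 = 0 \<and> (k + 1) mod 2 = 1 \<or> k mod 2 = 1 \<and> (k + 1) mod 2 = 0" for k :: nat
    by presburger
  have "x mod (2 * n) = n * (x div n mod 2) + x mod n"
    using mod_mult2_eq[of x n 2] by (simp add: mult.commute)
  moreover have "(x + n) mod (2 * n) = n * ((x div n + 1) mod 2) + x mod n"
    using mod_mult2_eq[of "x + n" n 2] assms by (simp add: mult.commute)
  ultimately show ?thesis using parity[of "x div n"] by (elim disjE) (simp_all add: insert_commute add.commute)
qed

lemma b_weight_le_b_weight_double:
  assumes cover: "\<And>m. m < n \<Longrightarrow> w m \<noteq> 0 \<Longrightarrow> c m \<noteq> 0 \<or> c (m + n) \<noteq> (0::'a::zero)"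
  shows "b_weight n b w \<le> b_weight (2 * n) b c"
proof -
  have "b_support n b w \<subseteq> (\<lambda>i. i mod n) ` b_support (2 * n) b c"
  proof
    fix i assume "i \<in> b_support n b w"
    then obtain j where "i < n" "j < b" and w: "w ((i + j) mod n) \<noteq> 0"
      by (auto simp: b_support_def)
    then have "0 < n" by simp
    then have "c ((i + j) mod n) \<noteq> 0 \<or> c ((i + j) mod n + n) \<noteq> 0"
      using cover w by simp
    then have "c ((i + j) mod (2 * n)) \<noteq> 0 \<or> c ((i + n + j) mod (2 * n)) \<noteq> 0"
      using mod_double_cases[OF \<open>0 < n\<close>, of "i + j"] by (auto simp: ac_simps doubleton_eq_iff)
    then have "i \<in> b_support (2 * n) b c \<or> i + n \<in> b_support (2 * n) b c"
      using \<open>i < n\<close> \<open>j < b\<close> by (auto simp: b_support_def)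
    then show "i \<in> (\<lambda>i. i mod n) ` b_support (2 * n) b c"
      using \<open>i < n\<close> by (auto intro: rev_image_eqI)
  qed
  then have "b_weight n b w \<le> card ((\<lambda>i. i mod n) ` b_support (2 * n) b c)"
    unfolding b_weight_def by (intro card_mono) (auto intro: finite_b_support)
  also have "\<dots> \<le> b_weight (2 * n) b c"
    unfolding b_weight_def by (rule card_image_le[OF finite_b_support])
  finally show ?thesis .
qed

definition plus_minus :: "nat \<Rightarrow> (nat \<Rightarrow> 'a::ab_group_add) \<Rightarrow> (nat \<Rightarrow> 'a) \<Rightarrow> nat \<Rightarrow> 'a" where
  "plus_minus n u v = (\<lambda>i. if i < n then u i + v i else if i < 2 * n then u (i - n) - v (i - n) else 0)"

lemma plus_minus_code_eq_image:
  "plus_minus_code n C1 C2 = (\<lambda>(u, v). plus_minus n u v) ` (C1 \<times> C2)"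
  unfolding plus_minus_code_def plus_minus_def by auto

lemma plus_minus_low: "m < n \<Longrightarrow> plus_minus n u v m = u m + v m"
  and plus_minus_high: "m < n \<Longrightarrow> plus_minus n u v (m + n) = u m - v m"
  by (simp_all add: plus_minus_def)

lemma plus_minus_zero [simp]: "plus_minus n 0 0 = 0"
  and plus_minus_add: "plus_minus n u v + plus_minus n u' v' = plus_minus n (u + u') (v + v')"
  and plus_minus_diff: "plus_minus n u v - plus_minus n u' v' = plus_minus n (u - u') (v - v')"
  and plus_minus_scaleF:
    "scaleF c (plus_minus n u v) = plus_minus n (scaleF c u) (scaleF c (v :: nat \<Rightarrow> 'a::field))"
  by (auto simp: plus_minus_def scaleF_def fun_eq_iff algebra_simps)

lemma plus_minus_nonzero:
  fixes u v :: "nat \<Rightarrow> 'a::field"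
  assumes "(2::'a) \<noteq> 0" and "m < n" and "u m \<noteq> 0 \<or> v m \<noteq> 0"
  shows "plus_minus n u v m \<noteq> 0 \<or> plus_minus n u v (m + n) \<noteq> 0"
proof (rule ccontr)
  assume "\<not> ?thesis"
  then have sum: "u m + v m = 0"
    by (metis plus_minus_low[OF \<open>m < n\<close>])
  from \<open>\<not> ?thesis\<close> have diff: "u m - v m = 0"
    by (metis plus_minus_high[OF \<open>m < n\<close>])
  have "2 * u m = (u m + v m) + (u m - v m)" "2 * v m = (u m + v m) - (u m - v m)"
    by (simp_all add: algebra_simps mult_2)
  then have "2 * u m = 0" "2 * v m = 0" by (simp_all only: sum diff add_0 diff_zero)
  then show False using assms(1,3) by simp
qed

lemma plus_minus_eq_0_iff:
  fixes u v :: "nat \<Rightarrow> 'a::field"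
  assumes "(2::'a) \<noteq> 0" and "u \<in> vecs n" and "v \<in> vecs n"
  shows "plus_minus n u v = 0 \<longleftrightarrow> u = 0 \<and> v = 0"
proof
  assume pm: "plus_minus n u v = 0"
  have "u m = 0 \<and> v m = 0" for m
  proof (cases "m < n")
    case True
    then show ?thesis using plus_minus_nonzero[OF assms(1) True, of u v] pm by auto
  next
    case False
    then show ?thesis using assms(2,3) by (simp add: vecs_def)
  qed
  then show "u = 0 \<and> v = 0" by (simp add: fun_eq_iff)
qed simp

lemma linear_code_plus_minus_code:
  fixes C1 C2 :: "(nat \<Rightarrow> 'a::field) set"
  assumes "linear_code n C1" and "linear_code n C2"
  shows "linear_code (2 * n) (plus_minus_code n C1 C2)"
proof -
  have sub: "V.subspace C1" "V.subspace C2"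
    using assms by (auto simp: linear_code_def)
  let ?C = "plus_minus_code n C1 C2"
  have mem: "x \<in> ?C \<longleftrightarrow> (\<exists>u \<in> C1. \<exists>v \<in> C2. x = plus_minus n u v)" for x
    by (auto simp: plus_minus_code_eq_image)
  have "V.subspace ?C"
    unfolding V.subspace_def
  proof (intro conjI ballI allI)
    show "0 \<in> ?C"
      using mem V.subspace_0[OF sub(1)] V.subspace_0[OF sub(2)] plus_minus_zero by metis
  next
    fix x y assume "x \<in> ?C" "y \<in> ?C"
    then show "x + y \<in> ?C"
      using mem V.subspace_add[OF sub(1)] V.subspace_add[OF sub(2)] plus_minus_add by metis
  next
    fix c x assume "x \<in> ?C"
    then show "scaleF c x \<in> ?C"
      using mem V.subspace_scale[OF sub(1)] V.subspace_scale[OF sub(2)] plus_minus_scaleF by metis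
  qed
  moreover have "plus_minus n u v \<in> vecs (2 * n)" for u v :: "nat \<Rightarrow> 'a"
    by (simp add: plus_minus_def vecs_def)
  ultimately show ?thesis
    unfolding linear_code_def using mem by auto
qed

lemma card_plus_minus_code:
  fixes C1 C2 :: "(nat \<Rightarrow> 'a::field) set"
  assumes "(2::'a) \<noteq> 0" and "linear_code n C1" and "linear_code n C2"
  shows "card (plus_minus_code n C1 C2) = card C1 * card C2"
proof -
  have sub: "V.subspace C1" "V.subspace C2" and vec: "C1 \<subseteq> vecs n" "C2 \<subseteq> vecs n"
    using assms(2,3) by (auto simp: linear_code_def)
  have "inj_on (\<lambda>(u, v). plus_minus n u v) (C1 \<times> C2)"
  proof (rule inj_onI, clarify)
    fix u v u' v'
    assume "u \<in> C1" "v \<in> C2" "u' \<in> C1" "v' \<in> C2" "plus_minus n u v = plus_minus n u' v'"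
    then have "plus_minus n (u - u') (v - v') = 0" by (simp add: plus_minus_diff[symmetric])
    moreover have "u - u' \<in> vecs n" "v - v' \<in> vecs n"
      using V.subspace_diff[OF sub(1) \<open>u \<in> C1\<close> \<open>u' \<in> C1\<close>]
        V.subspace_diff[OF sub(2) \<open>v \<in> C2\<close> \<open>v' \<in> C2\<close>] vec
      by auto
    ultimately show "u = u' \<and> v = v'" using plus_minus_eq_0_iff[OF assms(1)] by simp
  qed
  then show ?thesis unfolding plus_minus_code_eq_image by (simp add: card_image card_cartesian_product)
qed

lemma code_dim_plus_minus_code:
  fixes C1 C2 :: "(nat \<Rightarrow> 'a::{finite,field}) set"
  assumes "(2::'a) \<noteq> 0" and "linear_code n C1" and "linear_code n C2"
  shows "code_dim (plus_minus_code n C1 C2) = code_dim C1 + code_dim C2"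
proof -
  have "card (UNIV :: 'a set) ^ code_dim (plus_minus_code n C1 C2)
      = card (UNIV :: 'a set) ^ (code_dim C1 + code_dim C2)"
    using card_plus_minus_code[OF assms] card_linear_code assms(2,3)
      linear_code_plus_minus_code[OF assms(2,3)] by (metis power_add)
  then show ?thesis using card_field_ge_2[where 'a='a] by simp
qed

lemma b_dist_plus_minus_code_ge:
  fixes C1 C2 :: "(nat \<Rightarrow> 'a::{finite,field}) set"
  assumes "(2::'a) \<noteq> 0" and "linear_code n C1" and "linear_code n C2"
    and "u\<^sub>0 \<in> C1" "u\<^sub>0 \<noteq> 0" and "v\<^sub>0 \<in> C2" "v\<^sub>0 \<noteq> 0"
  shows "min (b_dist n b C1) (b_dist n b C2) \<le> b_dist (2 * n) b (plus_minus_code n C1 C2)"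
proof -
  let ?C = "plus_minus_code n C1 C2"
  have codes: "C1 \<subseteq> vecs n" "C2 \<subseteq> vecs n" "0 \<in> C2"
    using assms(2,3) V.subspace_0 by (auto simp: linear_code_def)
  have "finite ?C" using finite_linear_code linear_code_plus_minus_code[OF assms(2,3)] .
  moreover have "plus_minus n u\<^sub>0 0 \<in> ?C" "plus_minus n u\<^sub>0 0 \<noteq> 0"
    using assms(4,5) codes plus_minus_eq_0_iff[OF assms(1)]
    by (auto simp: plus_minus_code_eq_image vecs_def)
  moreover have "min (b_dist n b C1) (b_dist n b C2) \<le> b_weight (2 * n) b c"
    if "c \<in> ?C" "c \<noteq> 0" for c
  proof -
    obtain u v where c: "c = plus_minus n u v" "u \<in> C1" "v \<in> C2"
      using \<open>c \<in> ?C\<close> by (auto simp: plus_minus_code_eq_image)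
    have cover: "c m \<noteq> 0 \<or> c (m + n) \<noteq> 0" if "m < n" "u m \<noteq> 0 \<or> v m \<noteq> 0" for m
      using plus_minus_nonzero[where u = u and v = v, OF assms(1) that] c(1) by simp
    show ?thesis
    proof (cases "u = 0")
      case False
      then have "b_dist n b C1 \<le> b_weight n b u"
        using b_dist_le_b_weight finite_linear_code[OF assms(2)] c(2) by blast
      also have "\<dots> \<le> b_weight (2 * n) b c"
        using cover by (intro b_weight_le_b_weight_double) blast
      finally show ?thesis by simp
    next
      case True
      then have "v \<noteq> 0" using c \<open>c \<noteq> 0\<close> by auto
      then have "b_dist n b C2 \<le> b_weight n b v"
        using b_dist_le_b_weight finite_linear_code[OF assms(3)] c(3) by blast
      also have "\<dots> \<le> b_weight (2 * n) b c"
        using cover by (intro b_weight_le_b_weight_double) blast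
      finally show ?thesis by simp
    qed
  qed
  ultimately show ?thesis by (rule b_dist_greatest)
qed

theorem mainTheorem12:
  fixes C1 C2 :: "(nat \<Rightarrow> 'a::{finite, field}) set" and n b :: nat
  assumes "odd (card (UNIV :: 'a set))"
    and "linear_code n C1" and "linear_code n C2"
    and "b_symbol_MDS n b C1" and "b_symbol_MDS n b C2"
    and "b_dist n b C1 \<le> b_dist n b C2"
    and "1 \<le> b" and "b \<le> min (code_dim C1) (code_dim C2)"
  shows "b_dist n b C1 \<le> b_dist (2 * n) b (plus_minus_code n C1 C2)
       \<and> b_dist (2 * n) b (plus_minus_code n C1 C2) \<le> b_dist n b C1 + b_dist n b C2 - b"
proof
  have two: "(2::'a) \<noteq> 0" using two_neq_zero_if_odd_card[OF assms(1)] .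
  have "code_dim C1 \<le> n" "code_dim C2 \<le> n"
    using code_dim_le_length assms(2,3) by blast+
  then have d1: "b_dist n b C1 = n - code_dim C1 + b" and d2: "b_dist n b C2 = n - code_dim C2 + b"
    using assms(4,5,8) by (auto simp: b_symbol_MDS_def)
  have "0 < code_dim C1" "0 < code_dim C2" using assms(7,8) by simp_all
  then obtain u v where "u \<in> C1" "u \<noteq> 0" "v \<in> C2" "v \<noteq> 0"
    using exists_nonzero_if_code_dim_pos by meson
  from b_dist_plus_minus_code_ge[OF two assms(2,3) this, of b]
  show "b_dist n b C1 \<le> b_dist (2 * n) b (plus_minus_code n C1 C2)"
    using assms(6) by simp
  have "b_dist (2 * n) b (plus_minus_code n C1 C2) \<le> 2 * n + b - (code_dim C1 + code_dim C2)"
    using b_dist_singleton[OF linear_code_plus_minus_code[OF assms(2,3)]] assms(7,8)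
    by (simp add: code_dim_plus_minus_code[OF two assms(2,3)])
  then show "b_dist (2 * n) b (plus_minus_code n C1 C2) \<le> b_dist n b C1 + b_dist n b C2 - b"
    using d1 d2 \<open>code_dim C1 \<le> n\<close> \<open>code_dim C2 \<le> n\<close> by linarith
qed

end
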